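(* Let $\mathbb{F}$ be a field and $\mathcal{C}_2 \subsetneqq \mathcal{C}_1 \subseteq \mathbb{F}^{m \times n}$ linear codes with $\ell = \dim(\mathcal{C}_1) - \dim(\mathcal{C}_2)$. Then $$0 \leq d_{M,r+1}(\mathcal{C}_1,\mathcal{C}_2) - d_{M,r}(\mathcal{C}_1,\mathcal{C}_2) \leq \min\{m,n\} \quad \text{for } 1 \leq r \leq \ell - 1,$$ and $$d_{M,r}(\mathcal{C}_1,\mathcal{C}_2) + 1 \leq d_{M,r+m}(\mathcal{C}_1,\mathcal{C}_2) \quad \text{for } 1 \leq r \leq \ell - m.$$
   Context: ${\rm Row}(V)$ is the row space. For a subspace $\mathcal{L} \subseteq \mathbb{F}^n$, $\mathcal{V}_\mathcal{L} = \{V \in \mathbb{F}^{m\times n} \mid {\rm Row}(V) \subseteq \mathcal{L}\}$, and $d_{M,r}(\mathcal{C}_1,\mathcal{C}_2) = \min\{\dim \mathcal{L} \mid \mathcal{L}\subseteq\mathbb{F}^n, \dim(\mathcal{C}_1 \cap \mathcal{V}_\mathcal{L}) - \dim(\mathcal{C}_2 \cap \mathcal{V}_\mathcal{L}) \geq r\}$. *)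

theory Defs
  imports "HOL-Analysis.Analysis"
begin

text \<open>Vectors of F^n are elements of type 'a^'n (n = CARD('n));
  m x n matrices are elements of type 'a^'n^'m (rows indexed by 'm).\<close>

definition mscale :: "'a::field \<Rightarrow> 'a^'n^'m \<Rightarrow> 'a^'n^'m" where
  "mscale c A = (\<chi> i. c *s (A $ i))"

lemma mscale_vector_space: "vector_space (mscale :: 'a::field \<Rightarrow> 'a^'n^'m \<Rightarrow> 'a^'n^'m)"
  by unfold_locales (auto simp: mscale_def vec_eq_iff field_simps)

definition lin_code :: "('a::field^'n^'m) set \<Rightarrow> bool" where
  "lin_code C = module.subspace mscale C"

definition mdim :: "('a::field^'n^'m) set \<Rightarrow> nat" where
  "mdim C = vector_space.dim mscale C"

definition Row :: "'a::field^'n^'m \<Rightarrow> ('a^'n) set" where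
  "Row V = vec.span (range (\<lambda>i. V $ i))"

definition VL :: "('a::field^'n) set \<Rightarrow> ('a^'n^'m) set" where
  "VL L = {V. Row V \<subseteq> L}"

definition dMr :: "('a::field^'n^'m) set \<Rightarrow> ('a^'n^'m) set \<Rightarrow> nat \<Rightarrow> nat" where
  "dMr C1 C2 r = (LEAST d. \<exists>L. vec.subspace L \<and> vec.dim L = d \<and>
      int (mdim (C1 \<inter> VL L)) - int (mdim (C2 \<inter> VL L)) \<ge> int r)"

end

theory Submission
  imports Defs
begin

text \<open>Write \<open>\<delta>(L) = dim (C\<^sub>1 \<inter> V\<^sub>L) - dim (C\<^sub>2 \<inter> V\<^sub>L)\<close>, so that \<open>d\<^sub>M\<^sub>,\<^sub>r\<close> is the least
  dimension of a subspace \<open>L\<close> with \<open>\<delta>(L) \<ge> r\<close>.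
  Adding the \<open>m\<close> rows of a codeword \<open>C \<in> C\<^sub>1\<close> outside \<open>(C\<^sub>1 \<inter> V\<^sub>L) + C\<^sub>2\<close> raises
  \<open>dim L\<close> by at most \<open>m\<close> and \<open>\<delta>\<close> by at least one, which gives
  \<open>d\<^sub>M\<^sub>,\<^sub>r\<^sub>+\<^sub>1 \<le> d\<^sub>M\<^sub>,\<^sub>r + m\<close>; the bound \<open>n\<close> holds since \<open>d\<^sub>M\<^sub>,\<^sub>r\<^sub>+\<^sub>1 \<le> dim \<bbbF>\<^sup>n\<close>.
  Dropping one vector \<open>b\<close> from a basis of \<open>L\<close> shrinks \<open>V\<^sub>L\<close> by at most the \<open>m\<close>
  matrices with a single nonzero row \<open>b\<close>, so \<open>\<delta>\<close> drops by at most \<open>m\<close>; applied to an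
  optimal \<open>L\<close> for \<open>r + m\<close> this gives \<open>d\<^sub>M\<^sub>,\<^sub>r \<le> d\<^sub>M\<^sub>,\<^sub>r\<^sub>+\<^sub>m - 1\<close>.\<close>

context finite_dimensional_vector_space begin

lemma dim_Un_le_card: "finite T \<Longrightarrow> dim (S \<union> T) \<le> dim S + card T"
proof (induction T rule: finite_induct)
  case empty then show ?case by simp
next
  case (insert x F)
  have "dim (S \<union> insert x F) = dim (insert x (S \<union> F))" by simp
  also have "\<dots> \<le> dim (S \<union> F) + 1" by (simp add: dim_insert)
  finally show ?case using insert by simp
qed

lemma dim_diff_Int_eq_dim_Un_diff:
  assumes "subspace A" "subspace B"
  shows "int (dim A) - int (dim (A \<inter> B)) = int (dim (A \<union> B)) - int (dim B)"
proof -
  have "span (A \<union> B) = {x + y |x y. x \<in> A \<and> y \<in> B}"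
    using span_Un[of A B] assms[folded span_eq_iff] by simp
  then have "dim (A \<union> B) = dim {x + y |x y. x \<in> A \<and> y \<in> B}"
    by (metis dim_span)
  with dim_sums_Int[OF assms] show ?thesis by linarith
qed

end

definition matrix_unit :: "'m \<Rightarrow> 'n \<Rightarrow> 'a::field^'n^'m" where
  "matrix_unit i j = (\<chi> a b. if a = i \<and> b = j then 1 else 0)"

lemma span_matrix_units:
  "module.span mscale (range (\<lambda>(i, j). matrix_unit i j)) = (UNIV :: ('a::field^'n^'m) set)"
proof -
  interpret V: vector_space "mscale :: 'a \<Rightarrow> 'a^'n^'m \<Rightarrow> _" by (rule mscale_vector_space)
  have "A \<in> V.span (range (\<lambda>(i, j). matrix_unit i j))" for A :: "'a^'n^'m"
  proof -
    let ?expansion = "\<Sum>p\<in>UNIV. mscale (A $ fst p $ snd p) (matrix_unit (fst p) (snd p))"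
    have "?expansion $ a $ b = A $ a $ b" for a b
    proof -
      have "?expansion $ a $ b
          = (\<Sum>p\<in>UNIV. mscale (A $ fst p $ snd p) (matrix_unit (fst p) (snd p)) $ a $ b)"
        by (simp only: sum_component)
      also have "\<dots> = (\<Sum>p\<in>UNIV. if p = (a, b) then A $ a $ b else 0)"
        by (rule sum.cong[OF refl]) (auto simp: mscale_def matrix_unit_def)
      finally show ?thesis by simp
    qed
    then have "A = ?expansion" by (simp add: vec_eq_iff)
    then show ?thesis
      by (metis (no_types, lifting) V.span_sum V.span_scale V.span_base rangeI case_prod_beta)
  qed
  then show ?thesis by auto
qed

lemma matrix_space_finite_dimensional:
  "\<exists>B. finite_dimensional_vector_space (mscale :: 'a::field \<Rightarrow> 'a^'n^'m \<Rightarrow> _) B"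
proof -
  interpret V: vector_space "mscale :: 'a \<Rightarrow> 'a^'n^'m \<Rightarrow> _" by (rule mscale_vector_space)
  let ?E = "range (\<lambda>(i, j). matrix_unit i j) :: ('a^'n^'m) set"
  obtain B where B: "B \<subseteq> ?E" "V.independent B" "?E \<subseteq> V.span B"
    using V.maximal_independent_subset by blast
  have "finite B" using B(1) by (rule finite_subset) simp
  moreover have "V.span B = UNIV"
    using V.span_mono[OF B(3)] span_matrix_units[where 'a='a and 'n='n and 'm='m]
    by (simp add: V.span_span) blast
  ultimately show ?thesis using B(2) mscale_vector_space
    by (auto simp: finite_dimensional_vector_space_def finite_dimensional_vector_space_axioms_def)
qed

text \<open>Only the existence of a finite basis matters: \<open>M.dim\<close> is \<open>vector_space.dim mscale\<close>,
  i.e.\ \<open>mdim\<close>, whichever basis \<open>SOME\<close> picks.\<close>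

definition matrix_basis :: "('a::field^'n^'m) set" where
  "matrix_basis = (SOME B. finite_dimensional_vector_space mscale B)"

interpretation M: finite_dimensional_vector_space "mscale :: 'a::field \<Rightarrow> 'a^'n^'m \<Rightarrow> _"
  matrix_basis
  unfolding matrix_basis_def by (rule someI_ex[OF matrix_space_finite_dimensional])

lemma mem_VL_iff:
  assumes "vec.subspace L"
  shows "V \<in> VL L \<longleftrightarrow> (\<forall>i. V $ i \<in> L)"
proof -
  have "vec.span (range (($) V)) \<subseteq> L \<longleftrightarrow> range (($) V) \<subseteq> L"
    using assms vec.span_superset vec.span_minimal by blast
  then show ?thesis by (auto simp: VL_def Row_def)
qed

lemma VL_mono: "L \<subseteq> L' \<Longrightarrow> VL L \<subseteq> VL L'"
  by (auto simp: VL_def)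

lemma subspace_VL: "vec.subspace L \<Longrightarrow> M.subspace (VL L)"
  unfolding M.subspace_def
  by (auto simp: mem_VL_iff mscale_def vec.subspace_0 vec.subspace_add vec.subspace_scale)

lemma subspace_code_Int_VL: "lin_code C \<Longrightarrow> vec.subspace L \<Longrightarrow> M.subspace (C \<inter> VL L)"
  using subspace_VL M.subspace_inter by (auto simp: lin_code_def)

lemma VL_of_dim_0:
  assumes "vec.subspace L" "vec.dim L = 0"
  shows "VL L = ({0} :: ('a::field^'n^'m) set)"
proof -
  have "L = {0}" using assms vec.dim_eq_0 vec.subspace_0 by blast
  then show ?thesis using assms(1) by (auto simp: mem_VL_iff vec_eq_iff)
qed

definition relative_dim :: "('a::field^'n^'m) set \<Rightarrow> ('a^'n^'m) set \<Rightarrow> ('a^'n) set \<Rightarrow> int" where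
  "relative_dim C1 C2 L = int (mdim (C1 \<inter> VL L)) - int (mdim (C2 \<inter> VL L))"

lemma relative_dim_eq_dim_Un:
  assumes "lin_code C1" "lin_code C2" "C2 \<subseteq> C1" "vec.subspace L"
  shows "relative_dim C1 C2 L = int (M.dim ((C1 \<inter> VL L) \<union> C2)) - int (M.dim C2)"
proof -
  have "M.subspace C2" using assms(2) by (simp add: lin_code_def)
  moreover have "C1 \<inter> VL L \<inter> C2 = C2 \<inter> VL L" using assms(3) by blast
  ultimately show ?thesis
    using M.dim_diff_Int_eq_dim_Un_diff[OF subspace_code_Int_VL[OF assms(1,4)], of C2]
    by (simp add: relative_dim_def mdim_def)
qed

lemma relative_dim_UNIV: "relative_dim C1 C2 UNIV = int (mdim C1) - int (mdim C2)"
  by (simp add: relative_dim_def VL_def)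

lemma relative_dim_le_0_if_dim_0:
  fixes C1 C2 :: "('a::field^'n^'m) set"
  assumes "vec.subspace L" "vec.dim L = 0"
  shows "relative_dim C1 C2 L \<le> 0"
proof -
  have "M.dim (C1 \<inter> VL L) = 0" using VL_of_dim_0[OF assms, where 'm='m] by simp
  then show ?thesis unfolding relative_dim_def mdim_def by linarith
qed

lemma relative_dim_increase:
  fixes C1 C2 :: "('a::field^'n^'m) set"
  assumes "lin_code C1" "lin_code C2" "C2 \<subseteq> C1" "vec.subspace L"
    and "relative_dim C1 C2 L < int (mdim C1) - int (mdim C2)"
  obtains L' where "vec.subspace L'" "vec.dim L' \<le> vec.dim L + CARD('m)"
    "relative_dim C1 C2 L + 1 \<le> relative_dim C1 C2 L'"
proof -
  define A where "A = C1 \<inter> VL L"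
  have gap_L: "relative_dim C1 C2 L = int (M.dim (A \<union> C2)) - int (M.dim C2)"
    using relative_dim_eq_dim_Un[OF assms(1-4)] A_def by simp
  have "\<not> C1 \<subseteq> M.span (A \<union> C2)"
  proof
    assume "C1 \<subseteq> M.span (A \<union> C2)"
    then have "M.dim C1 \<le> M.dim (A \<union> C2)" by (rule M.dim_mono)
    then show False using assms(5) gap_L by (simp add: mdim_def)
  qed
  then obtain C where C: "C \<in> C1" "C \<notin> M.span (A \<union> C2)" by blast
  define L' where "L' = vec.span (L \<union> range (($) C))"
  have "vec.dim L' = vec.dim (L \<union> range (($) C))" by (simp add: L'_def)
  also have "\<dots> \<le> vec.dim L + card (range (($) C))" by (rule vec.dim_Un_le_card) simp
  also have "card (range (($) C)) \<le> CARD('m)" by (rule card_image_le) simp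
  finally have dim_L': "vec.dim L' \<le> vec.dim L + CARD('m)" by simp
  have "L \<subseteq> L'" unfolding L'_def using vec.span_superset by blast
  moreover have "C \<in> VL L'" by (simp add: mem_VL_iff L'_def vec.span_base)
  ultimately have "insert C (A \<union> C2) \<subseteq> (C1 \<inter> VL L') \<union> C2"
    using C(1) VL_mono unfolding A_def by blast
  then have "M.dim (insert C (A \<union> C2)) \<le> M.dim ((C1 \<inter> VL L') \<union> C2)" by (rule M.dim_subset)
  moreover have "M.dim (insert C (A \<union> C2)) = M.dim (A \<union> C2) + 1"
    using C(2) M.dim_insert[of C "A \<union> C2"] by presburger
  moreover have "relative_dim C1 C2 L' = int (M.dim ((C1 \<inter> VL L') \<union> C2)) - int (M.dim C2)"
    by (rule relative_dim_eq_dim_Un[OF assms(1-3)]) (simp add: L'_def)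
  ultimately have "relative_dim C1 C2 L + 1 \<le> relative_dim C1 C2 L'"
    using gap_L by linarith
  moreover have "vec.subspace L'" by (simp add: L'_def)
  ultimately show thesis using that dim_L' by blast
qed

definition single_row_matrix :: "'m \<Rightarrow> 'a::field^'n \<Rightarrow> 'a^'n^'m" where
  "single_row_matrix i b = (\<chi> a. if a = i then b else 0)"

lemma dim_VL_span_insert_le:
  fixes L :: "('a::field^'n) set"
  assumes "vec.subspace L"
  shows "M.dim (VL (vec.span (insert b L)) :: ('a^'n^'m) set) \<le> M.dim (VL L :: ('a^'n^'m) set) + CARD('m)"
proof -
  define R where "R = range (\<lambda>i. single_row_matrix i b :: 'a^'n^'m)"
  have "VL (vec.span (insert b L)) \<subseteq> M.span (VL L \<union> R)"
  proof
    fix V :: "'a^'n^'m" assume "V \<in> VL (vec.span (insert b L))"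
    then have "\<forall>i. \<exists>k. V $ i - k *s b \<in> L"
      using assms by (simp add: mem_VL_iff vec.span_breakdown_eq vec.span_eq_iff[THEN iffD2])
    then obtain k where k: "\<And>i. V $ i - k i *s b \<in> L" by (metis choice)
    define W where "W = (\<chi> a. V $ a - k a *s b)"
    have "W \<in> VL L" using assms k by (simp add: mem_VL_iff W_def)
    have rows: "(\<Sum>i\<in>UNIV. mscale (k i) (single_row_matrix i b)) $ a = k a *s b" for a
    proof -
      have "(\<Sum>i\<in>UNIV. mscale (k i) (single_row_matrix i b)) $ a
          = (\<Sum>i\<in>UNIV. if i = a then k a *s b else 0)"
        unfolding sum_component
        by (rule sum.cong[OF refl]) (auto simp: mscale_def single_row_matrix_def)
      then show ?thesis by simp
    qed
    then have "V = W + (\<Sum>i\<in>UNIV. mscale (k i) (single_row_matrix i b))"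
      by (simp add: vec_eq_iff W_def rows[unfolded sum_component])
    also have "\<dots> \<in> M.span (VL L \<union> R)"
      by (intro M.span_add M.span_sum M.span_scale M.span_base)
        (auto simp: \<open>W \<in> VL L\<close> R_def)
    finally show "V \<in> M.span (VL L \<union> R)" .
  qed
  then have "M.dim (VL (vec.span (insert b L)) :: ('a^'n^'m) set) \<le> M.dim (VL L \<union> R)"
    by (rule M.dim_mono)
  also have "\<dots> \<le> M.dim (VL L :: ('a^'n^'m) set) + card R"
    by (rule M.dim_Un_le_card) (simp add: R_def)
  also have "card R \<le> CARD('m)" unfolding R_def by (rule card_image_le) simp
  finally show ?thesis by simp
qed

lemma relative_dim_le_add_dim_VL_diff:
  fixes C1 C2 :: "('a::field^'n^'m) set"
  assumes "lin_code C1" "vec.subspace L" "vec.subspace L'" "L' \<subseteq> L"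
  shows "relative_dim C1 C2 L
    \<le> relative_dim C1 C2 L' + int (M.dim (VL L :: ('a^'n^'m) set)) - int (M.dim (VL L' :: ('a^'n^'m) set))"
proof -
  define A where "A = C1 \<inter> VL L"
  have "A \<inter> VL L' = C1 \<inter> VL L'" using VL_mono[OF assms(4)] A_def by blast
  moreover have "int (M.dim A) - int (M.dim (A \<inter> VL L'))
      = int (M.dim (A \<union> VL L')) - int (M.dim (VL L' :: ('a^'n^'m) set))"
    using subspace_code_Int_VL[OF assms(1,2)] subspace_VL[OF assms(3)]
    by (intro M.dim_diff_Int_eq_dim_Un_diff) (simp_all add: A_def)
  ultimately have "int (M.dim A) - int (M.dim (C1 \<inter> VL L'))
      = int (M.dim (A \<union> VL L')) - int (M.dim (VL L' :: ('a^'n^'m) set))"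
    by simp
  moreover have "M.dim (A \<union> VL L') \<le> M.dim (VL L :: ('a^'n^'m) set)"
    by (rule M.dim_subset) (use VL_mono[OF assms(4)] A_def in blast)
  moreover have "M.dim (C2 \<inter> VL L') \<le> M.dim (C2 \<inter> VL L)"
    by (rule M.dim_subset) (use VL_mono[OF assms(4)] in blast)
  ultimately show ?thesis unfolding relative_dim_def mdim_def A_def by linarith
qed

lemma relative_dim_decrease:
  fixes C1 C2 :: "('a::field^'n^'m) set"
  assumes "lin_code C1" "vec.subspace L" "vec.dim L \<noteq> 0"
  obtains L' where "vec.subspace L'" "vec.dim L' + 1 = vec.dim L"
    "relative_dim C1 C2 L \<le> relative_dim C1 C2 L' + int CARD('m)"
proof -
  obtain B where B: "finite B" "B \<subseteq> L" "vec.independent B" "vec.span B = L" "card B = vec.dim L"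
    using vec.basis_subspace_exists[OF assms(2)] by blast
  then obtain b where b: "b \<in> B" using assms(3) by fastforce
  define L' where "L' = vec.span (B - {b})"
  have sub_L': "vec.subspace L'" by (simp add: L'_def)
  have "vec.dim L' = card (B - {b})" unfolding L'_def
    by (rule vec.dim_span_eq_card_independent) (rule vec.independent_mono[OF B(3)], blast)
  then have dim_L': "vec.dim L' + 1 = vec.dim L"
    using B b assms(3) by (simp add: card_Diff_singleton del: vec.dim_eq_0)
  have "L' \<subseteq> L" unfolding L'_def using B(4) vec.span_mono[of "B - {b}" B] by blast
  have "vec.span (insert b L') = vec.span (insert b (B - {b}))"
    unfolding L'_def by (simp only: vec.span_insert vec.span_span)
  also have "\<dots> = L" using B(4) b by (simp add: insert_absorb)
  finally have "M.dim (VL L :: ('a^'n^'m) set) \<le> M.dim (VL L' :: ('a^'n^'m) set) + CARD('m)"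
    using dim_VL_span_insert_le[OF sub_L', of b] by simp
  then show thesis
    using that[OF sub_L' dim_L'] relative_dim_le_add_dim_VL_diff[OF assms(1,2) sub_L' \<open>L' \<subseteq> L\<close>, of C2]
    by linarith
qed

lemma dMr_le: "vec.subspace L \<Longrightarrow> int r \<le> relative_dim C1 C2 L \<Longrightarrow> dMr C1 C2 r \<le> vec.dim L"
  unfolding dMr_def relative_dim_def by (rule Least_le) blast

lemma relative_dim_UNIV_ge:
  assumes "C2 \<subseteq> C1" "r \<le> mdim C1 - mdim C2"
  shows "int r \<le> relative_dim C1 C2 UNIV"
proof -
  have "mdim C2 \<le> mdim C1" using assms(1) M.dim_subset by (simp add: mdim_def)
  then show ?thesis using assms(2) unfolding relative_dim_UNIV by linarith
qed

lemma dMr_le_card: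
  fixes C1 C2 :: "('a::field^'n^'m) set"
  assumes "C2 \<subseteq> C1" "r \<le> mdim C1 - mdim C2"
  shows "dMr C1 C2 r \<le> CARD('n)"
  using dMr_le[OF vec.subspace_UNIV relative_dim_UNIV_ge[OF assms]] by (simp add: card_cart_basis)

lemma dMr_attained:
  fixes C1 C2 :: "('a::field^'n^'m) set"
  assumes "C2 \<subseteq> C1" "r \<le> mdim C1 - mdim C2"
  obtains L where "vec.subspace L" "vec.dim L = dMr C1 C2 r" "int r \<le> relative_dim C1 C2 L"
proof -
  have "\<exists>d L. vec.subspace L \<and> vec.dim L = d \<and> int r \<le> relative_dim C1 C2 L"
    using relative_dim_UNIV_ge[OF assms] vec.subspace_UNIV by blast
  from LeastI_ex[OF this[unfolded relative_dim_def]] show thesis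
    using that unfolding dMr_def relative_dim_def by blast
qed

lemma dMr_mono:
  assumes "C2 \<subseteq> C1" "r \<le> s" "s \<le> mdim C1 - mdim C2"
  shows "dMr C1 C2 r \<le> dMr C1 C2 s"
proof -
  obtain L where "vec.subspace L" "vec.dim L = dMr C1 C2 s" "int s \<le> relative_dim C1 C2 L"
    using dMr_attained[OF assms(1,3)] .
  then show ?thesis using assms(2) dMr_le[of L r C1 C2] by simp
qed

lemma dMr_Suc_le_add_card:
  fixes C1 C2 :: "('a::field^'n^'m) set"
  assumes "lin_code C1" "lin_code C2" "C2 \<subseteq> C1" "r + 1 \<le> mdim C1 - mdim C2"
  shows "dMr C1 C2 (r + 1) \<le> dMr C1 C2 r + CARD('m)"
proof -
  obtain L where L: "vec.subspace L" "vec.dim L = dMr C1 C2 r" "int r \<le> relative_dim C1 C2 L"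
    using dMr_attained[OF assms(3), of r] assms(4) by auto
  show ?thesis
  proof (cases "int (r + 1) \<le> relative_dim C1 C2 L")
    case True
    then show ?thesis using dMr_le[OF L(1)] L(2) by fastforce
  next
    case False
    then have "relative_dim C1 C2 L < int (mdim C1) - int (mdim C2)" using assms(4) by linarith
    then obtain L' where "vec.subspace L'" "vec.dim L' \<le> vec.dim L + CARD('m)"
        "relative_dim C1 C2 L + 1 \<le> relative_dim C1 C2 L'"
      using relative_dim_increase[OF assms(1-3) L(1)] by blast
    then show ?thesis using dMr_le[of L' "r + 1" C1 C2] L by simp
  qed
qed

lemma dMr_lt_dMr_add_card:
  fixes C1 C2 :: "('a::field^'n^'m) set"
  assumes "lin_code C1" "C2 \<subseteq> C1" "r + CARD('m) \<le> mdim C1 - mdim C2"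
  shows "dMr C1 C2 r + 1 \<le> dMr C1 C2 (r + CARD('m))"
proof -
  obtain L where L: "vec.subspace L" "vec.dim L = dMr C1 C2 (r + CARD('m))"
      "int (r + CARD('m)) \<le> relative_dim C1 C2 L"
    using dMr_attained[OF assms(2,3)] .
  have "vec.dim L \<noteq> 0"
  proof
    assume "vec.dim L = 0"
    then have "relative_dim C1 C2 L \<le> 0" by (rule relative_dim_le_0_if_dim_0[OF L(1)])
    with L(3) have "CARD('m) = 0" by linarith
    then show False by simp
  qed
  then obtain L' where "vec.subspace L'" "vec.dim L' + 1 = vec.dim L"
      "relative_dim C1 C2 L \<le> relative_dim C1 C2 L' + int CARD('m)"
    using relative_dim_decrease[OF assms(1) L(1)] by blast
  then show ?thesis using dMr_le[of L' r C1 C2] L by simp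
qed

theorem proposition14:
  fixes C1 C2 :: "('a::field^'n^'m) set"
  assumes "lin_code C1" and "lin_code C2" and "C2 \<subset> C1"
  defines "l \<equiv> mdim C1 - mdim C2"
  shows "(\<forall>r. 1 \<le> r \<and> r + 1 \<le> l \<longrightarrow>
            0 \<le> int (dMr C1 C2 (r + 1)) - int (dMr C1 C2 r) \<and>
            int (dMr C1 C2 (r + 1)) - int (dMr C1 C2 r) \<le> int (min CARD('m) CARD('n)))
       \<and> (\<forall>r. 1 \<le> r \<and> r + CARD('m) \<le> l \<longrightarrow>
            dMr C1 C2 r + 1 \<le> dMr C1 C2 (r + CARD('m)))"
proof (intro conjI allI impI)
  fix r assume r: "1 \<le> r \<and> r + 1 \<le> l"
  have sub: "C2 \<subseteq> C1" using assms(3) by blast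
  have "dMr C1 C2 r \<le> dMr C1 C2 (r + 1)"
    using dMr_mono[OF sub] r l_def by simp
  moreover have "dMr C1 C2 (r + 1) \<le> dMr C1 C2 r + CARD('m)"
    using dMr_Suc_le_add_card[OF assms(1,2) sub] r l_def by simp
  moreover have "dMr C1 C2 (r + 1) \<le> CARD('n)"
    using dMr_le_card[OF sub] r l_def by simp
  ultimately show "0 \<le> int (dMr C1 C2 (r + 1)) - int (dMr C1 C2 r)"
    and "int (dMr C1 C2 (r + 1)) - int (dMr C1 C2 r) \<le> int (min CARD('m) CARD('n))"
    by linarith+
next
  fix r assume "1 \<le> r \<and> r + CARD('m) \<le> l"
  then show "dMr C1 C2 r + 1 \<le> dMr C1 C2 (r + CARD('m))"
    using dMr_lt_dMr_add_card[OF assms(1)] assms(3) l_def by blast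
qed

end
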